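(* Let $\alpha>-1$ and $\beta>0$. For every $\Phi\in\mathcal{C}_\zeta([0,\infty))$ and every $\ell>1$, $$\lim_{\eta\to\infty}\sup_{x\in[0,\infty)}\frac{|\mathcal{R}_{\eta}^{(\alpha,\beta)}(\Phi;x)-\Phi(x)|}{(\zeta(x))^{\ell}}=0.$$
   Context: The generalized Laguerre polynomials are $\mathcal{L}_k^{(\alpha)}(t)=\sum_{i=0}^{k}\frac{(-1)^i}{i!}\binom{k+\alpha}{k-i}t^i$. Put $p_{\eta,k}(x)=e^{-\eta x/2}2^{-\alpha-1}2^{-k}\mathcal{L}_k^{(\alpha)}(-\eta x/2)$ and, for $k\ge1$, $z>0$, $\mathcal{I}_{k,\eta}^{\beta}(z)=\frac{\eta\beta e^{-\eta\beta z}(\eta\beta z)^{k\beta-1}}{\Gamma(k\beta)}$. The operator is $\mathcal{R}_{\eta}^{(\alpha,\beta)}(\Phi;x)=p_{\eta,0}(x)\Phi(0)+\sum_{k=1}^{\infty}p_{\eta,k}(x)\int_0^\infty\mathcal{I}_{k,\eta}^{\beta}(z)\Phi(z)\,dz$, $\eta>0$. Let $\zeta(x)=1+x^2$. $\mathcal{B}_\zeta([0,\infty))$ is the space of $\Phi:[0,\infty)\to\mathbb{R}$ with $|\Phi(x)|\le M_\Phi\zeta(x)$ for some constant $M_\Phi$, normed by $\|\Phi\|_\zeta=\sup_{x\ge0}|\Phi(x)|/\zeta(x)$; $\mathcal{C}_\zeta([0,\infty))$ is the subspace of continuous functions in $\mathcal{B}_\zeta([0,\infty))$. *)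

theory Defs
  imports "HOL-Analysis.Analysis"
begin

definition laguerre :: "nat \<Rightarrow> real \<Rightarrow> real \<Rightarrow> real" where
  "laguerre k \<alpha> t = (\<Sum>i=0..k. ((-1)^i / fact i) * ((real k + \<alpha>) gchoose (k - i)) * t ^ i)"

definition p_basis :: "real \<Rightarrow> real \<Rightarrow> nat \<Rightarrow> real \<Rightarrow> real" where
  "p_basis \<alpha> \<eta> k x = exp (- \<eta> * x / 2) * 2 powr (- \<alpha> - 1) * 2 powr (- real k)
      * laguerre k \<alpha> (- \<eta> * x / 2)"

definition I_kernel :: "real \<Rightarrow> nat \<Rightarrow> real \<Rightarrow> real \<Rightarrow> real" where
  "I_kernel \<beta> k \<eta> z = \<eta> * \<beta> * exp (- \<eta> * \<beta> * z) * (\<eta> * \<beta> * z) powr (real k * \<beta> - 1)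
      / Gamma (real k * \<beta>)"

definition R_op :: "real \<Rightarrow> real \<Rightarrow> real \<Rightarrow> (real \<Rightarrow> real) \<Rightarrow> real \<Rightarrow> real" where
  "R_op \<alpha> \<beta> \<eta> \<Phi> x = p_basis \<alpha> \<eta> 0 x * \<Phi> 0
     + (\<Sum>k. p_basis \<alpha> \<eta> (Suc k) x
          * (LBINT z:{0<..}. I_kernel \<beta> (Suc k) \<eta> z * \<Phi> z))"

definition zeta :: "real \<Rightarrow> real" where
  "zeta x = 1 + x^2"

definition B_zeta :: "(real \<Rightarrow> real) set" where
  "B_zeta = {\<Phi>. \<exists>M. \<forall>x\<ge>0. \<bar>\<Phi> x\<bar> \<le> M * zeta x}"

definition C_zeta :: "(real \<Rightarrow> real) set" where
  "C_zeta = {\<Phi> \<in> B_zeta. continuous_on {0..} \<Phi>}"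

end

theory Submission
  imports Defs
begin

text \<open>
  For \<open>\<eta> x \<ge> 0\<close> the weights \<open>p_basis \<alpha> \<eta> k x\<close> are the distribution of \<open>I + J\<close>, where
  \<open>I\<close> is Poisson with mean \<open>\<eta> x / 2\<close> and, given \<open>I = i\<close>, \<open>J\<close> is negative binomial with
  parameters \<open>i + \<alpha> + 1\<close> and \<open>1/2\<close>; so they are nonnegative, sum to 1, and have mean
  \<open>\<alpha> + 1 + \<eta> x\<close> and computable second moment. The kernels \<open>I_kernel \<beta> k \<eta>\<close> are gamma
  densities with mean \<open>k / \<eta>\<close> and second moment \<open>(k\<^sup>2 + k / \<beta>) / \<eta>\<^sup>2\<close>. Hence the operator is
  positive, reproduces constants, and its second central moment at \<open>x\<close> is
  \<open>C\<^sub>0 / \<eta>\<^sup>2 + C\<^sub>1 x / \<eta>\<close>. A Korovkin-type estimate \<open>\<bar>\<Phi> t - \<Phi> x\<bar> \<le> \<epsilon> + D (t - x)\<^sup>2\<close>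
  then gives uniform convergence on compact sets, while for large \<open>x\<close> the error is
  \<open>O(\<zeta> x)\<close> uniformly in \<open>\<eta> \<ge> 1\<close>, which the weight \<open>\<zeta>(x)\<^sup>l\<close> with \<open>l > 1\<close> makes small.
\<close>

lemma sums_cong_eq: "f sums a \<Longrightarrow> (\<And>n. f n = g n) \<Longrightarrow> a = b \<Longrightarrow> g sums b"
  by (metis ext)

lemma sums_diagonal_nonneg:
  fixes c :: "nat \<Rightarrow> nat \<Rightarrow> real"
  assumes nonneg: "\<And>i j. 0 \<le> c i j" and rows: "\<And>i. c i sums S i" and total: "S sums T"
  shows "(\<lambda>k. \<Sum>i\<le>k. c i (k - i)) sums T"
proof -
  have rows': "((\<lambda>j. c i j) has_sum S i) UNIV" for i
    using rows nonneg by (rule sums_nonneg_imp_has_sum)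
  have "S i \<ge> 0" for i using rows'[of i] nonneg by (rule has_sum_nonneg)
  then have total': "(S has_sum T) UNIV" using total by (intro sums_nonneg_imp_has_sum) auto
  have "((\<lambda>(i, j). c i j) has_sum T) (UNIV \<times> UNIV)"
    using rows' total' nonneg
    by (intro has_sum_SigmaI summable_on_SigmaI[where g = S]) (auto simp: has_sum_iff)
  moreover have "bij_betw (\<lambda>(k::nat, i). (i, k - i)) (SIGMA k:UNIV. {..k}) (UNIV \<times> UNIV)"
    by (rule bij_betw_byWitness[where f' = "\<lambda>(i, j). (i + j, i)"]) auto
  ultimately have "((\<lambda>(k, i). c i (k - i)) has_sum T) (SIGMA k:UNIV. {..k})"
    using has_sum_reindex_bij_betw[of "\<lambda>(k, i). (i, k - i)" _ _ "\<lambda>(i, j). c i j"]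
    by (simp add: split_def)
  then have "((\<lambda>k. \<Sum>i\<le>k. c i (k - i)) has_sum T) UNIV"
    by (rule has_sum_SigmaD) auto
  then show ?thesis by (rule has_sum_imp_sums)
qed

lemma sums_exp_real: "(\<lambda>i. s ^ i / fact i) sums (exp s :: real)"
  using exp_converges[of s] by (simp add: divide_inverse mult.commute)

lemma exp_series_term_Suc: "real (Suc n) * (s ^ Suc n / fact (Suc n)) = s * (s ^ n / fact n :: real)"
  by (simp add: field_simps del: of_nat_Suc)

lemma sums_exp_moment1: "(\<lambda>i. real i * (s ^ i / fact i)) sums (s * exp s :: real)"
proof -
  have "(\<lambda>n. s * (s ^ n / fact n)) sums (s * exp s)" by (intro sums_mult sums_exp_real)
  then have "(\<lambda>n. real (Suc n) * (s ^ Suc n / fact (Suc n))) sums (s * exp s)"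
    by (simp only: exp_series_term_Suc)
  then show ?thesis by (subst (asm) sums_Suc_iff) simp
qed

lemma sums_exp_moment2: "(\<lambda>i. real i ^ 2 * (s ^ i / fact i)) sums ((s^2 + s) * exp s :: real)"
proof -
  have "(\<lambda>n. s * (real n * (s ^ n / fact n))) sums (s * (s * exp s))"
    by (intro sums_mult sums_exp_moment1)
  moreover have "(\<lambda>n. real (Suc n) * (real (Suc n) - 1) * (s ^ Suc n / fact (Suc n)))
      = (\<lambda>n. s * (real n * (s ^ n / fact n)))"
  proof
    fix n
    have "real (Suc n) * (real (Suc n) - 1) * (s ^ Suc n / fact (Suc n))
        = real n * (real (Suc n) * (s ^ Suc n / fact (Suc n)))"
      by (simp add: mult_ac)
    also have "\<dots> = s * (real n * (s ^ n / fact n))"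
      by (simp only: exp_series_term_Suc mult_ac)
    finally show "real (Suc n) * (real (Suc n) - 1) * (s ^ Suc n / fact (Suc n))
        = s * (real n * (s ^ n / fact n))" .
  qed
  ultimately have "(\<lambda>n. real (Suc n) * (real (Suc n) - 1) * (s ^ Suc n / fact (Suc n))) sums (s * (s * exp s))"
    by simp
  then have "(\<lambda>n. real n * (real n - 1) * (s ^ n / fact n)) sums (s * (s * exp s))"
    by (subst (asm) sums_Suc_iff) simp
  then have "(\<lambda>n. real n * (real n - 1) * (s ^ n / fact n) + real n * (s ^ n / fact n))
      sums (s * (s * exp s) + s * exp s)"
    by (intro sums_add sums_exp_moment1)
  then show ?thesis by (simp add: power2_eq_square algebra_simps)
qed

text \<open>\<open>2 powr (- r) * negbin_half r j\<close> is the negative binomial law with parameters \<open>r\<close> and \<open>1/2\<close>.\<close>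

definition negbin_half :: "real \<Rightarrow> nat \<Rightarrow> real" where
  "negbin_half r j = pochhammer r j / fact j / 2 ^ j"

lemma negbin_half_nonneg: "r > 0 \<Longrightarrow> 0 \<le> negbin_half r j"
  unfolding negbin_half_def by (intro divide_nonneg_nonneg) (auto intro: less_imp_le pochhammer_pos)

lemma negbin_half_eq_gbinomial: "negbin_half r j = ((- r) gchoose j) * (- 1 / 2) ^ j"
proof -
  have "(-1::real) ^ j * (-1) ^ j = 1" by (simp flip: power_mult_distrib)
  moreover have "(- 1 / 2 :: real) ^ j = (-1) ^ j / 2 ^ j" by (simp only: power_divide)
  ultimately show ?thesis
    unfolding negbin_half_def by (simp add: gbinomial_pochhammer)
qed

lemma sums_negbin_half: "r > 0 \<Longrightarrow> negbin_half r sums (2 powr r)"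
proof -
  have "(\<lambda>n. ((- r) gchoose n) * (- 1 / 2) ^ n) sums (1 + (- 1 / 2)) powr (- r)"
    by (rule gen_binomial_real) simp
  moreover have "(1 + (- 1 / 2 :: real)) powr (- r) = 2 powr r"
    by (simp add: powr_minus_divide powr_divide)
  ultimately show ?thesis by (simp add: negbin_half_eq_gbinomial[abs_def])
qed

lemma negbin_half_Suc: "real (Suc n) * negbin_half r (Suc n) = r / 2 * negbin_half (r + 1) n"
  unfolding negbin_half_def by (simp add: pochhammer_rec field_simps del: of_nat_Suc)

lemma sums_negbin_half_moment1:
  assumes "r > 0" shows "(\<lambda>j. real j * negbin_half r j) sums (r * 2 powr r)"
proof -
  have "(\<lambda>n. r / 2 * negbin_half (r + 1) n) sums (r / 2 * 2 powr (r + 1))"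
    using assms by (intro sums_mult sums_negbin_half) auto
  then have "(\<lambda>n. real (Suc n) * negbin_half r (Suc n)) sums (r * 2 powr r)"
    by (simp only: negbin_half_Suc) (simp add: powr_add)
  then show ?thesis by (subst (asm) sums_Suc_iff) simp
qed

lemma sums_negbin_half_moment2:
  assumes "r > 0" shows "(\<lambda>j. real j ^ 2 * negbin_half r j) sums ((r^2 + 2 * r) * 2 powr r)"
proof -
  have "(\<lambda>n. r / 2 * (real n * negbin_half (r + 1) n)) sums (r / 2 * ((r + 1) * 2 powr (r + 1)))"
    using assms by (intro sums_mult sums_negbin_half_moment1) auto
  moreover have "(\<lambda>n. real n * (real (Suc n) * negbin_half r (Suc n)))
      = (\<lambda>n. r / 2 * (real n * negbin_half (r + 1) n))"
    by (simp only: negbin_half_Suc mult_ac)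
  ultimately have "(\<lambda>n. real n * (real (Suc n) * negbin_half r (Suc n))) sums (r * (r + 1) * 2 powr r)"
    by (simp add: powr_add mult_ac)
  then have "(\<lambda>n. real (Suc n) * (real (Suc n) - 1) * negbin_half r (Suc n)) sums (r * (r + 1) * 2 powr r)"
    by (simp add: mult_ac)
  then have "(\<lambda>j. real j * (real j - 1) * negbin_half r j) sums (r * (r + 1) * 2 powr r)"
    by (subst (asm) sums_Suc_iff) simp
  then have "(\<lambda>j. real j * (real j - 1) * negbin_half r j + real j * negbin_half r j)
      sums (r * (r + 1) * 2 powr r + r * 2 powr r)"
    by (intro sums_add sums_negbin_half_moment1 assms)
  then show ?thesis by (simp add: power2_eq_square algebra_simps)
qed

text \<open>Joint law of \<open>(I, J)\<close> with \<open>I\<close> Poisson of mean \<open>s\<close> and \<open>J\<close> negative binomial with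
  parameters \<open>I + a\<close> and \<open>1/2\<close> given \<open>I\<close>.\<close>

definition poisson_negbin :: "real \<Rightarrow> real \<Rightarrow> nat \<Rightarrow> nat \<Rightarrow> real" where
  "poisson_negbin a s i j = exp (- s) * (s ^ i / fact i) * 2 powr (- (real i + a)) * negbin_half (real i + a) j"

lemma poisson_negbin_nonneg: "a > 0 \<Longrightarrow> s \<ge> 0 \<Longrightarrow> 0 \<le> poisson_negbin a s i j"
  unfolding poisson_negbin_def by (intro mult_nonneg_nonneg negbin_half_nonneg) auto

lemma sums_poisson_negbin_row:
  assumes "(\<lambda>j. negbin_half (real i + a) j * f j) sums (W * 2 powr (real i + a))"
  shows "(\<lambda>j. poisson_negbin a s i j * f j) sums (exp (- s) * (s ^ i / fact i) * W)"
proof -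
  have "(\<lambda>j. (exp (- s) * (s ^ i / fact i) * 2 powr (- (real i + a))) * (negbin_half (real i + a) j * f j))
      sums ((exp (- s) * (s ^ i / fact i) * 2 powr (- (real i + a))) * (W * 2 powr (real i + a)))"
    by (intro sums_mult assms)
  moreover have "2 powr (- (real i + a)) * (W * 2 powr (real i + a)) = W"
  proof -
    have "2 powr (- (real i + a)) * 2 powr (real i + a) = (1::real)"
      by (simp flip: powr_add)
    then show ?thesis by (metis mult.left_commute mult_1_right)
  qed
  ultimately show ?thesis unfolding poisson_negbin_def by (simp only: mult.assoc)
qed

lemma p_basis_eq_diagonal:
  assumes "\<alpha> > -1"
  shows "p_basis \<alpha> \<eta> k x = (\<Sum>i\<le>k. poisson_negbin (\<alpha> + 1) (\<eta> * x / 2) i (k - i))"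
  unfolding p_basis_def laguerre_def atLeast0AtMost sum_distrib_left
proof (intro sum.cong refl)
  fix i assume "i \<in> {..k}"
  then have ik: "i \<le> k" by simp
  let ?s = "\<eta> * x / 2"
  have binom: "(real k + \<alpha>) gchoose (k - i) = pochhammer (real i + (\<alpha> + 1)) (k - i) / fact (k - i)"
    by (subst gbinomial_pochhammer') (simp add: of_nat_diff ik algebra_simps)
  have sign: "(-1) ^ i / fact i * (- \<eta> * x / 2) ^ i = ?s ^ i / fact i"
  proof -
    have "(-1::real) ^ i * (-1) ^ i = 1" by (simp flip: power_mult_distrib)
    then show ?thesis by (simp add: power_minus' divide_simps)
  qed
  have pow2: "2 powr (- \<alpha> - 1) * 2 powr (- real k) = 2 powr (- (real i + (\<alpha> + 1))) / 2 ^ (k - i)"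
  proof -
    have "2 powr (- \<alpha> - 1) * 2 powr (- real k) = 2 powr (- (real i + (\<alpha> + 1)) - real (k - i))"
      by (simp add: powr_add[symmetric] of_nat_diff ik) (rule arg_cong[where f = "\<lambda>t. 2 powr t"], simp)
    then show ?thesis by (simp add: powr_diff powr_realpow)
  qed
  have "exp (- \<eta> * x / 2) * 2 powr (- \<alpha> - 1) * 2 powr (- real k)
        * ((-1) ^ i / fact i * ((real k + \<alpha>) gchoose (k - i)) * (- \<eta> * x / 2) ^ i)
      = exp (- ?s) * (2 powr (- \<alpha> - 1) * 2 powr (- real k))
        * (((-1) ^ i / fact i * (- \<eta> * x / 2) ^ i) * ((real k + \<alpha>) gchoose (k - i)))"
    by (simp add: ac_simps)
  also have "\<dots> = poisson_negbin (\<alpha> + 1) ?s i (k - i)"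
    unfolding sign pow2 binom poisson_negbin_def negbin_half_def by (simp add: ac_simps)
  finally show "exp (- \<eta> * x / 2) * 2 powr (- \<alpha> - 1) * 2 powr (- real k)
        * ((-1) ^ i / fact i * ((real k + \<alpha>) gchoose (k - i)) * (- \<eta> * x / 2) ^ i)
      = poisson_negbin (\<alpha> + 1) ?s i (k - i)" .
qed

text \<open>Puts the moment factor \<open>g k\<close> into the shape \<open>c' i (k - i)\<close> required by
  \<open>sums_diagonal_nonneg\<close>.\<close>

lemma sum_diagonal_mult_right:
  fixes k :: nat
  shows "(\<Sum>i\<le>k. c i (k - i)) * (g k :: real) = (\<Sum>i\<le>k. c i (k - i) * g (i + (k - i)))"
  unfolding sum_distrib_right by (intro sum.cong refl) (simp add: le_add_diff_inverse)

lemma sums_poisson_negbin: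
  assumes "a > 0" "s \<ge> 0"
  shows "(\<lambda>k. \<Sum>i\<le>k. poisson_negbin a s i (k - i)) sums 1"
proof (rule sums_diagonal_nonneg)
  show "0 \<le> poisson_negbin a s i j" for i j using assms by (rule poisson_negbin_nonneg)
  show "poisson_negbin a s i sums (exp (- s) * (s ^ i / fact i))" for i
    using sums_poisson_negbin_row[of i a "\<lambda>j. 1" 1 s] sums_negbin_half[of "real i + a"] assms by simp
  show "(\<lambda>i. exp (- s) * (s ^ i / fact i)) sums 1"
    using sums_mult[OF sums_exp_real[of s], of "exp (- s)"] by (simp add: exp_minus field_simps)
qed

lemma sums_poisson_negbin_moment1:
  assumes "a > 0" "s \<ge> 0"
  shows "(\<lambda>k. (\<Sum>i\<le>k. poisson_negbin a s i (k - i)) * real k) sums (a + 2 * s)"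
  unfolding sum_diagonal_mult_right[where g = real]
proof (rule sums_diagonal_nonneg)
  show "0 \<le> poisson_negbin a s i j * real (i + j)" for i j using poisson_negbin_nonneg[OF assms] by simp
  show "(\<lambda>j. poisson_negbin a s i j * real (i + j)) sums (exp (- s) * (s ^ i / fact i) * (2 * real i + a))" for i
  proof -
    let ?r = "real i + a"
    have "(\<lambda>j. real i * negbin_half ?r j + real j * negbin_half ?r j) sums (real i * 2 powr ?r + ?r * 2 powr ?r)"
      using assms by (intro sums_add sums_mult sums_negbin_half sums_negbin_half_moment1) auto
    then have "(\<lambda>j. negbin_half ?r j * real (i + j)) sums ((2 * real i + a) * 2 powr ?r)"
      by (simp add: algebra_simps)
    then show ?thesis by (rule sums_poisson_negbin_row)
  qed
  have "(\<lambda>i. exp (- s) * (2 * (real i * (s ^ i / fact i)) + a * (s ^ i / fact i)))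
      sums (exp (- s) * (2 * (s * exp s) + a * exp s))"
    by (intro sums_mult sums_add sums_exp_real sums_exp_moment1)
  then show "(\<lambda>i. exp (- s) * (s ^ i / fact i) * (2 * real i + a)) sums (a + 2 * s)"
    by (rule sums_cong_eq) (simp_all add: exp_minus field_simps)
qed

lemma sums_poisson_negbin_moment2:
  assumes "a > 0" "s \<ge> 0"
  shows "(\<lambda>k. (\<Sum>i\<le>k. poisson_negbin a s i (k - i)) * real k ^ 2) sums ((a + 2 * s)^2 + 6 * s + 2 * a)"
  unfolding sum_diagonal_mult_right[where g = "\<lambda>k. real k ^ 2"]
proof (rule sums_diagonal_nonneg)
  show "0 \<le> poisson_negbin a s i j * real (i + j) ^ 2" for i j using poisson_negbin_nonneg[OF assms] by simp
  show "(\<lambda>j. poisson_negbin a s i j * real (i + j) ^ 2)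
      sums (exp (- s) * (s ^ i / fact i) * (4 * real i ^ 2 + (4 * a + 2) * real i + a ^ 2 + 2 * a))" for i
  proof -
    let ?r = "real i + a"
    have "(\<lambda>j. real i ^ 2 * negbin_half ?r j + 2 * real i * (real j * negbin_half ?r j) + real j ^ 2 * negbin_half ?r j)
        sums (real i ^ 2 * 2 powr ?r + 2 * real i * (?r * 2 powr ?r) + (?r ^ 2 + 2 * ?r) * 2 powr ?r)"
      using assms
      by (intro sums_add sums_mult sums_negbin_half sums_negbin_half_moment1 sums_negbin_half_moment2) auto
    then have "(\<lambda>j. negbin_half ?r j * real (i + j) ^ 2)
        sums ((4 * real i ^ 2 + (4 * a + 2) * real i + a ^ 2 + 2 * a) * 2 powr ?r)"
      by (simp add: algebra_simps power2_eq_square)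
    then show ?thesis by (rule sums_poisson_negbin_row)
  qed
  have "(\<lambda>i. exp (- s) * (4 * (real i ^ 2 * (s ^ i / fact i)) + (4 * a + 2) * (real i * (s ^ i / fact i))
        + (a ^ 2 + 2 * a) * (s ^ i / fact i)))
      sums (exp (- s) * (4 * ((s^2 + s) * exp s) + (4 * a + 2) * (s * exp s) + (a ^ 2 + 2 * a) * exp s))"
    by (intro sums_mult sums_add sums_exp_real sums_exp_moment1 sums_exp_moment2)
  then show "(\<lambda>i. exp (- s) * (s ^ i / fact i) * (4 * real i ^ 2 + (4 * a + 2) * real i + a ^ 2 + 2 * a))
      sums ((a + 2 * s)^2 + 6 * s + 2 * a)"
    by (rule sums_cong_eq) (simp_all add: exp_minus field_simps power2_eq_square)
qed

definition gamma_density :: "real \<Rightarrow> real \<Rightarrow> real \<Rightarrow> real" where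
  "gamma_density L r z = L * exp (- L * z) * (L * z) powr (r - 1) / Gamma r"

lemma I_kernel_eq_gamma_density: "I_kernel \<beta> k \<eta> z = gamma_density (\<eta> * \<beta>) (real k * \<beta>) z"
  unfolding I_kernel_def gamma_density_def by (simp add: mult.assoc)

lemma gamma_density_nonneg: "r > 0 \<Longrightarrow> L > 0 \<Longrightarrow> z > 0 \<Longrightarrow> 0 \<le> gamma_density L r z"
  unfolding gamma_density_def by (intro divide_nonneg_nonneg mult_nonneg_nonneg) auto

lemma gamma_density_measurable [measurable]: "gamma_density L r \<in> borel_measurable borel"
  unfolding gamma_density_def by measurable

text \<open>The substitution \<open>u = L z\<close> turns the moment integral into Euler's integral for \<open>\<Gamma>(r + m)\<close>.\<close>

lemma nn_integral_gamma_density_moment: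
  fixes m :: nat
  assumes L: "L > 0" and r: "r > 0"
  shows "(\<integral>\<^sup>+z. ennreal (indicator {0<..} z * (gamma_density L r z * z ^ m)) \<partial>lborel)
         = ennreal (Gamma (r + real m) / (Gamma r * L ^ m))"
proof -
  define f where "f z = ennreal (indicator {0<..} z * (gamma_density L r z * z ^ m))" for z
  define g where "g u = ennreal (indicator {0..} u * u powr (r + real m - 1) / exp u)" for u
  have f_meas: "f \<in> borel_measurable borel" unfolding f_def by measurable
  have g_meas: "g \<in> borel_measurable borel" unfolding g_def by measurable
  have Gamma_pos: "Gamma r > 0" using r by simp
  have substitution: "f (u / L) = ennreal (1 / (Gamma r * L ^ m)) * ennreal L * g u" for u
  proof (cases "u > 0")
    case True
    have "(L * (u / L)) powr (r - 1) * (u / L) ^ m = u powr (r - 1) * u ^ m / L ^ m"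
      using L by (simp add: power_divide)
    also have "u powr (r - 1) * u ^ m = u powr (r + real m - 1)"
      using True by (simp add: powr_realpow[symmetric] powr_add[symmetric] algebra_simps)
    finally have "(L * (u / L)) powr (r - 1) * (u / L) ^ m = u powr (r + real m - 1) / L ^ m" .
    then have "indicator {0<..} (u / L) * (gamma_density L r (u / L) * (u / L) ^ m)
        = 1 / (Gamma r * L ^ m) * L * (u powr (r + real m - 1) / exp u)"
      using True L unfolding gamma_density_def by (simp add: field_simps exp_minus)
    then show ?thesis using True L Gamma_pos unfolding f_def g_def
      by (simp add: ennreal_mult[symmetric] mult.assoc)
  next
    case False
    then have "u / L \<le> 0" using L by (simp add: divide_nonpos_pos)
    with False show ?thesis unfolding f_def g_def by (cases "u = 0") auto
  qed
  have "(\<integral>\<^sup>+z. f z \<partial>lborel) = ennreal (1 / L) * (\<integral>\<^sup>+u. f (0 + 1 / L * u) \<partial>lborel)"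
    using nn_integral_real_affine[OF f_meas, of "1 / L" 0] L by simp
  also have "\<dots> = ennreal (1 / L) * ((ennreal (1 / (Gamma r * L ^ m)) * ennreal L) * (\<integral>\<^sup>+u. g u \<partial>lborel))"
    using g_meas by (simp add: substitution nn_integral_cmult)
  also have "(\<integral>\<^sup>+u. g u \<partial>lborel) = ennreal (Gamma (r + real m))"
    unfolding g_def using r by (simp add: Gamma_conv_nn_integral_real)
  also have "ennreal (1 / L) * ((ennreal (1 / (Gamma r * L ^ m)) * ennreal L) * ennreal (Gamma (r + real m)))
      = ennreal (Gamma (r + real m) / (Gamma r * L ^ m))"
    using L Gamma_pos r by (simp add: ennreal_mult[symmetric] field_simps)
  finally show ?thesis unfolding f_def .
qed

lemma gamma_density_moment:
  fixes m :: nat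
  assumes L: "L > 0" and r: "r > 0"
  shows "set_integrable lborel {0<..} (\<lambda>z. gamma_density L r z * z ^ m)"
    and "(LBINT z:{0<..}. gamma_density L r z * z ^ m) = Gamma (r + real m) / (Gamma r * L ^ m)"
proof -
  let ?h = "\<lambda>z. indicator {0<..} z * (gamma_density L r z * z ^ m)"
  have h_meas: "?h \<in> borel_measurable lborel" by measurable
  have h_nonneg: "AE z in lborel. 0 \<le> ?h z"
    using assms by (auto intro!: mult_nonneg_nonneg gamma_density_nonneg simp: indicator_def)
  note nn = nn_integral_gamma_density_moment[OF L r, of m]
  have "integrable lborel ?h"
    by (rule integrableI_nn_integral_finite[OF h_meas h_nonneg nn])
  then show "set_integrable lborel {0<..} (\<lambda>z. gamma_density L r z * z ^ m)"
    by (simp add: set_integrable_def)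
  have "integral\<^sup>L lborel ?h = enn2real (\<integral>\<^sup>+z. ennreal (?h z) \<partial>lborel)"
    by (rule integral_eq_nn_integral[OF h_meas h_nonneg])
  also have "\<dots> = Gamma (r + real m) / (Gamma r * L ^ m)"
    using nn L r by (simp add: enn2real_ennreal)
  finally show "(LBINT z:{0<..}. gamma_density L r z * z ^ m) = Gamma (r + real m) / (Gamma r * L ^ m)"
    by (simp add: set_lebesgue_integral_def)
qed

lemma gamma_density_integral:
  assumes "L > 0" "r > 0"
  shows "(LBINT z:{0<..}. gamma_density L r z) = 1"
  using gamma_density_moment(2)[OF assms, of 0] Gamma_real_pos[OF assms(2)] by simp

lemma Gamma_plus1_pos: "r > 0 \<Longrightarrow> Gamma (r + 1) = r * Gamma (r::real)"
  by (rule Gamma_plus1) (auto simp: nonpos_Ints_def)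

lemma gamma_density_mean:
  assumes "L > 0" "r > 0"
  shows "(LBINT z:{0<..}. gamma_density L r z * z) = r / L"
  using gamma_density_moment(2)[OF assms, of 1] Gamma_plus1_pos[of r] Gamma_real_pos[OF assms(2)] assms
  by simp

lemma gamma_density_second_moment:
  assumes "L > 0" "r > 0"
  shows "(LBINT z:{0<..}. gamma_density L r z * z ^ 2) = (r ^ 2 + r) / L ^ 2"
proof -
  have "(LBINT z:{0<..}. gamma_density L r z * z ^ 2) = Gamma (r + 1 + 1) / (Gamma r * L ^ 2)"
    using gamma_density_moment(2)[OF assms, of 2] by (simp add: add.assoc)
  also have "Gamma (r + 1 + 1) = (r + 1) * r * Gamma r"
    using Gamma_plus1_pos[of "r + 1"] Gamma_plus1_pos[of r] assms by simp
  also have "(r + 1) * r * Gamma r / (Gamma r * L ^ 2) = (r ^ 2 + r) / L ^ 2"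
    using Gamma_real_pos[OF assms(2)] assms(1) by (simp add: field_simps power2_eq_square)
  finally show ?thesis .
qed

lemma integral_error_bound_quadratic:
  fixes K \<Phi> :: "real \<Rightarrow> real"
  assumes K_nonneg: "\<And>z. 0 \<le> K z" and K_vanishes: "\<And>z. z \<le> 0 \<Longrightarrow> K z = 0"
    and int0: "integrable lborel K" and int1: "integrable lborel (\<lambda>z. K z * z)"
    and int2: "integrable lborel (\<lambda>z. K z * z ^ 2)"
    and mass: "integral\<^sup>L lborel K = 1" and mean: "integral\<^sup>L lborel (\<lambda>z. K z * z) = m1"
    and second: "integral\<^sup>L lborel (\<lambda>z. K z * z ^ 2) = m2"
    and meas: "(\<lambda>z. K z * \<Phi> z) \<in> borel_measurable lborel"
    and growth: "\<And>z. z \<ge> 0 \<Longrightarrow> \<bar>\<Phi> z\<bar> \<le> M * (1 + z ^ 2)"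
    and modulus: "\<And>t. t \<ge> 0 \<Longrightarrow> \<bar>\<Phi> t - \<Phi> x\<bar> \<le> E + D * (t - x) ^ 2"
  shows "integrable lborel (\<lambda>z. K z * \<Phi> z)"
    and "\<bar>integral\<^sup>L lborel (\<lambda>z. K z * \<Phi> z) - \<Phi> x\<bar> \<le> E + D * (m2 - 2 * x * m1 + x ^ 2)"
proof -
  have "integrable lborel (\<lambda>z. M * K z + M * (K z * z ^ 2))"
    using int0 int2 by (intro Bochner_Integration.integrable_add Bochner_Integration.integrable_mult_right)
  moreover have "norm (K z * \<Phi> z) \<le> norm (M * K z + M * (K z * z ^ 2))" for z
  proof (cases "z \<le> 0")
    case False
    then have "K z * \<bar>\<Phi> z\<bar> \<le> K z * (M * (1 + z ^ 2))"
      using growth K_nonneg by (intro mult_left_mono) auto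
    then show ?thesis using K_nonneg[of z] by (simp add: abs_mult algebra_simps)
  qed (simp add: K_vanishes)
  ultimately show int: "integrable lborel (\<lambda>z. K z * \<Phi> z)"
    using meas by (blast intro: Bochner_Integration.integrable_bound AE_I2)
  let ?g = "\<lambda>z. E * K z + D * (K z * z ^ 2) - (2 * D * x) * (K z * z) + (D * x ^ 2) * K z"
  have int_g: "integrable lborel ?g"
    using int0 int1 int2
    by (intro Bochner_Integration.integrable_add Bochner_Integration.integrable_diff
        Bochner_Integration.integrable_mult_right)
  have int_diff: "integrable lborel (\<lambda>z. K z * \<Phi> z - \<Phi> x * K z)"
    using int int0 by (intro Bochner_Integration.integrable_diff Bochner_Integration.integrable_mult_right)
  have "integral\<^sup>L lborel (\<lambda>z. K z * \<Phi> z) - \<Phi> x = integral\<^sup>L lborel (\<lambda>z. K z * \<Phi> z - \<Phi> x * K z)"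
    using int int0 mass by (simp add: Bochner_Integration.integral_diff)
  also have "\<bar>\<dots>\<bar> \<le> integral\<^sup>L lborel (\<lambda>z. \<bar>K z * \<Phi> z - \<Phi> x * K z\<bar>)"
    by (rule integral_abs_bound)
  also have "\<dots> \<le> integral\<^sup>L lborel ?g"
  proof (rule integral_mono[OF Bochner_Integration.integrable_abs[OF int_diff] int_g])
    fix z
    show "\<bar>K z * \<Phi> z - \<Phi> x * K z\<bar> \<le> ?g z"
    proof (cases "z \<le> 0")
      case False
      then have "K z * \<bar>\<Phi> z - \<Phi> x\<bar> \<le> K z * (E + D * (z - x) ^ 2)"
        using modulus K_nonneg by (intro mult_left_mono) auto
      moreover have "\<bar>K z * \<Phi> z - \<Phi> x * K z\<bar> = K z * \<bar>\<Phi> z - \<Phi> x\<bar>"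
      proof -
        have "K z * \<Phi> z - \<Phi> x * K z = K z * (\<Phi> z - \<Phi> x)" by (simp add: algebra_simps)
        then show ?thesis using K_nonneg[of z] by (simp add: abs_mult)
      qed
      ultimately show ?thesis by (simp add: algebra_simps power2_eq_square)
    qed (simp add: K_vanishes)
  qed
  also have "integral\<^sup>L lborel ?g = E * integral\<^sup>L lborel K + D * integral\<^sup>L lborel (\<lambda>z. K z * z ^ 2)
       - (2 * D * x) * integral\<^sup>L lborel (\<lambda>z. K z * z) + (D * x ^ 2) * integral\<^sup>L lborel K"
    using int0 int1 int2 by (simp add: Bochner_Integration.integral_add Bochner_Integration.integral_diff)
  also have "\<dots> = E + D * (m2 - 2 * x * m1 + x ^ 2)"
    unfolding mass mean second by (simp add: algebra_simps)
  finally show "\<bar>integral\<^sup>L lborel (\<lambda>z. K z * \<Phi> z) - \<Phi> x\<bar> \<le> E + D * (m2 - 2 * x * m1 + x ^ 2)" .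
qed

lemma gamma_density_error_bound:
  fixes \<Phi> :: "real \<Rightarrow> real"
  assumes pos: "L > 0" "r > 0"
    and cont: "continuous_on {0..} \<Phi>"
    and growth: "\<And>z. z \<ge> 0 \<Longrightarrow> \<bar>\<Phi> z\<bar> \<le> M * (1 + z ^ 2)"
    and modulus: "\<And>t. t \<ge> 0 \<Longrightarrow> \<bar>\<Phi> t - \<Phi> x\<bar> \<le> E + D * (t - x) ^ 2"
  shows "\<bar>(LBINT z:{0<..}. gamma_density L r z * \<Phi> z) - \<Phi> x\<bar>
           \<le> E + D * ((r ^ 2 + r) / L ^ 2 - 2 * x * (r / L) + x ^ 2)"
proof -
  define K where "K z = indicator {0<..} z * gamma_density L r z" for z :: real
  have moment_eq: "(\<lambda>z. indicator {0<..} z * (gamma_density L r z * z ^ m)) = (\<lambda>z. K z * z ^ m)" for m :: nat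
    by (simp add: K_def mult.assoc)
  have int: "integrable lborel (\<lambda>z. K z * z ^ m)" for m :: nat
    using gamma_density_moment(1)[OF pos, of m] by (simp add: set_integrable_def moment_eq)
  have val: "integral\<^sup>L lborel (\<lambda>z. K z * z ^ m) = (LBINT z:{0<..}. gamma_density L r z * z ^ m)" for m :: nat
    by (simp add: set_lebesgue_integral_def moment_eq)
  have "continuous_on {0<..} \<Phi>" using cont by (rule continuous_on_subset) auto
  then have "(\<lambda>z. indicator {0<..} z *\<^sub>R \<Phi> z) \<in> borel_measurable borel"
    by (intro borel_measurable_continuous_on_indicator) simp
  then have "(\<lambda>z. gamma_density L r z * (indicator {0<..} z *\<^sub>R \<Phi> z)) \<in> borel_measurable borel"
    by measurable
  then have meas: "(\<lambda>z. K z * \<Phi> z) \<in> borel_measurable lborel"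
    by (simp add: K_def mult_ac)
  have "\<bar>integral\<^sup>L lborel (\<lambda>z. K z * \<Phi> z) - \<Phi> x\<bar> \<le> E + D * ((r ^ 2 + r) / L ^ 2 - 2 * x * (r / L) + x ^ 2)"
  proof (rule integral_error_bound_quadratic(2)[OF _ _ _ _ _ _ _ _ meas growth modulus])
    show "0 \<le> K z" for z using gamma_density_nonneg[OF pos(2,1), of z] by (simp add: K_def indicator_def)
    show "K z = 0" if "z \<le> 0" for z using that by (simp add: K_def)
    show "integrable lborel K" using int[of 0] by simp
    show "integrable lborel (\<lambda>z. K z * z)" using int[of 1] by simp
    show "integrable lborel (\<lambda>z. K z * z ^ 2)" by (rule int)
    show "integral\<^sup>L lborel K = 1" using val[of 0] gamma_density_integral[OF pos] by simp
    show "integral\<^sup>L lborel (\<lambda>z. K z * z) = r / L" using val[of 1] gamma_density_mean[OF pos] by simp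
    show "integral\<^sup>L lborel (\<lambda>z. K z * z ^ 2) = (r ^ 2 + r) / L ^ 2"
      using val[of 2] gamma_density_second_moment[OF pos] by simp
  qed
  moreover have "(LBINT z:{0<..}. gamma_density L r z * \<Phi> z) = integral\<^sup>L lborel (\<lambda>z. K z * \<Phi> z)"
    by (simp add: set_lebesgue_integral_def K_def mult.assoc)
  ultimately show ?thesis by simp
qed

lemma suminf_weighted_error_bound:
  fixes q J b :: "nat \<Rightarrow> real"
  assumes q_nonneg: "\<And>k. 0 \<le> q k" and q_sums: "q sums 1"
    and error: "\<And>k. \<bar>J k - y\<bar> \<le> b k" and summable_qb: "summable (\<lambda>k. q k * b k)"
  shows "summable (\<lambda>k. q k * J k)" and "\<bar>(\<Sum>k. q k * J k) - y\<bar> \<le> (\<Sum>k. q k * b k)"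
proof -
  have bound: "norm (q k * (J k - y)) \<le> q k * b k" for k
    using error[of k] q_nonneg[of k] by (simp add: abs_mult mult_left_mono)
  have summable_diff: "summable (\<lambda>k. q k * (J k - y))"
    by (rule summable_comparison_test'[OF summable_qb bound])
  have summable_q: "summable (\<lambda>k. y * q k)"
    using q_sums by (intro summable_mult sums_summable)
  have "summable (\<lambda>k. q k * (J k - y) + y * q k)"
    by (rule summable_add[OF summable_diff summable_q])
  then show summable_qJ: "summable (\<lambda>k. q k * J k)" by (simp add: algebra_simps)
  have "(\<Sum>k. q k * J k) - y = (\<Sum>k. q k * J k) - (\<Sum>k. y * q k)"
    using q_sums by (simp add: suminf_mult sums_iff)
  also have "\<dots> = (\<Sum>k. q k * J k - y * q k)"
    by (rule suminf_diff[OF summable_qJ summable_q])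
  also have "\<dots> = (\<Sum>k. q k * (J k - y))"
    by (simp add: algebra_simps)
  finally show "\<bar>(\<Sum>k. q k * J k) - y\<bar> \<le> (\<Sum>k. q k * b k)"
    using norm_suminf_le[OF bound summable_qb] by simp
qed

lemma p_basis_nonneg: "\<alpha> > -1 \<Longrightarrow> 0 \<le> \<eta> * x \<Longrightarrow> 0 \<le> p_basis \<alpha> \<eta> k x"
  by (simp add: p_basis_eq_diagonal poisson_negbin_nonneg sum_nonneg)

lemma R_op_eq_suminf:
  assumes "summable (\<lambda>k. p_basis \<alpha> \<eta> k x * J k)"
    and "J 0 = \<Phi> 0" and "\<And>k. k > 0 \<Longrightarrow> J k = (LBINT z:{0<..}. I_kernel \<beta> k \<eta> z * \<Phi> z)"
  shows "R_op \<alpha> \<beta> \<eta> \<Phi> x = (\<Sum>k. p_basis \<alpha> \<eta> k x * J k)"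
  using suminf_split_head[OF assms(1)] assms(2,3) unfolding R_op_def by simp

lemma R_op_error_bound:
  fixes \<Phi> :: "real \<Rightarrow> real"
  assumes \<alpha>: "\<alpha> > -1" and \<beta>: "\<beta> > 0" and \<eta>: "\<eta> > 0" and x: "x \<ge> 0"
    and cont: "continuous_on {0..} \<Phi>"
    and growth: "\<And>z. z \<ge> 0 \<Longrightarrow> \<bar>\<Phi> z\<bar> \<le> M * (1 + z ^ 2)"
    and modulus: "\<And>t. t \<ge> 0 \<Longrightarrow> \<bar>\<Phi> t - \<Phi> x\<bar> \<le> E + D * (t - x) ^ 2"
  shows "\<bar>R_op \<alpha> \<beta> \<eta> \<Phi> x - \<Phi> x\<bar>
           \<le> E + D * (((\<alpha> + 1)^2 + 2 * (\<alpha> + 1) + (\<alpha> + 1) / \<beta>) / \<eta>^2 + (3 + 1 / \<beta>) * x / \<eta>)"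
proof -
  define a where "a = \<alpha> + 1"
  define s where "s = \<eta> * x / 2"
  have a: "a > 0" using \<alpha> by (simp add: a_def)
  have s: "s \<ge> 0" using \<eta> x by (simp add: s_def)
  define q where "q k = p_basis \<alpha> \<eta> k x" for k
  have q_eq: "q = (\<lambda>k. \<Sum>i\<le>k. poisson_negbin a s i (k - i))"
    unfolding q_def a_def s_def by (intro ext p_basis_eq_diagonal[OF \<alpha>])
  have q_nonneg: "0 \<le> q k" for k
    unfolding q_def using \<alpha> \<eta> x by (intro p_basis_nonneg) auto
  define J where "J k = (if k = 0 then \<Phi> 0 else (LBINT z:{0<..}. I_kernel \<beta> k \<eta> z * \<Phi> z))" for k
  define m2 where "m2 k = (real k ^ 2 + real k / \<beta>) / \<eta> ^ 2 - 2 * x * (real k / \<eta>) + x ^ 2" for k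
  have J_error: "\<bar>J k - \<Phi> x\<bar> \<le> E + D * m2 k" for k
  proof (cases "k = 0")
    case False
    have "((real k * \<beta>) ^ 2 + real k * \<beta>) / (\<eta> * \<beta>) ^ 2 - 2 * x * (real k * \<beta> / (\<eta> * \<beta>)) + x ^ 2 = m2 k"
      using \<beta> \<eta> by (simp add: m2_def field_simps power2_eq_square)
    then show ?thesis
      using gamma_density_error_bound[of "\<eta> * \<beta>" "real k * \<beta>", OF _ _ cont growth modulus] False \<beta> \<eta>
      by (simp add: J_def I_kernel_eq_gamma_density)
  qed (use modulus[of 0] in \<open>simp add: J_def m2_def\<close>)
  have "(\<lambda>k. (E + D * x^2) * q k + (D / \<eta>^2) * (q k * real k ^ 2) + (D / (\<beta> * \<eta>^2) - 2 * D * x / \<eta>) * (q k * real k))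
      sums ((E + D * x^2) * 1 + (D / \<eta>^2) * ((a + 2 * s)^2 + 6 * s + 2 * a)
            + (D / (\<beta> * \<eta>^2) - 2 * D * x / \<eta>) * (a + 2 * s))"
    unfolding q_eq
    by (intro sums_add sums_mult sums_poisson_negbin sums_poisson_negbin_moment1
        sums_poisson_negbin_moment2 a s)
  then have bound_sums: "(\<lambda>k. q k * (E + D * m2 k))
      sums (E + D * ((a^2 + 2 * a + a / \<beta>) / \<eta>^2 + (3 + 1 / \<beta>) * x / \<eta>))"
    by (rule sums_cong_eq) (use \<eta> \<beta> in \<open>simp_all add: m2_def s_def field_simps power2_eq_square\<close>)
  have q_sums: "q sums 1" unfolding q_eq using a s by (rule sums_poisson_negbin)
  note weighted = suminf_weighted_error_bound[OF q_nonneg q_sums J_error sums_summable[OF bound_sums]]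
  have "R_op \<alpha> \<beta> \<eta> \<Phi> x = (\<Sum>k. q k * J k)"
    unfolding q_def by (rule R_op_eq_suminf) (use weighted(1) in \<open>simp_all add: q_def J_def\<close>)
  with weighted(2) bound_sums show ?thesis by (simp add: sums_iff a_def)
qed

lemma one_le_zeta: "1 \<le> zeta x"
  by (simp add: zeta_def)

lemma le_zeta: "x \<le> zeta x"
  using zero_le_power2[of "x - 1 / 2"] by (simp add: zeta_def power2_eq_square algebra_simps)

lemma growth_quadratic_modulus:
  fixes \<Phi> :: "real \<Rightarrow> real"
  assumes growth: "\<And>z. z \<ge> 0 \<Longrightarrow> \<bar>\<Phi> z\<bar> \<le> M * (1 + z ^ 2)" and M: "M \<ge> 0"
    and x: "x \<ge> 0" and t: "t \<ge> 0"
  shows "\<bar>\<Phi> t - \<Phi> x\<bar> \<le> 3 * M * (1 + x^2) + 2 * M * (t - x) ^ 2"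
proof -
  have "t ^ 2 \<le> 2 * x^2 + 2 * (t - x)^2"
    using zero_le_power2[of "t - 2 * x"] by (simp add: power2_eq_square algebra_simps)
  then have "M * t ^ 2 \<le> M * (2 * x^2 + 2 * (t - x)^2)" using M by (rule mult_left_mono)
  moreover have "\<bar>\<Phi> t - \<Phi> x\<bar> \<le> M * (1 + t ^ 2) + M * (1 + x ^ 2)"
    using growth[OF t] growth[OF x] by simp
  moreover have "M * x^2 \<ge> 0" using M by simp
  ultimately show ?thesis using M by (simp add: algebra_simps)
qed

text \<open>Uniform continuity handles \<open>\<bar>t - x\<bar> < d\<close>; beyond that the quadratic growth bound is
  absorbed into \<open>D (t - x)\<^sup>2\<close> since \<open>(t - x)\<^sup>2 \<ge> d\<^sup>2\<close>.\<close>

lemma continuous_quadratic_modulus: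
  fixes \<Phi> :: "real \<Rightarrow> real"
  assumes cont: "continuous_on {0..} \<Phi>"
    and growth: "\<And>z. z \<ge> 0 \<Longrightarrow> \<bar>\<Phi> z\<bar> \<le> M * (1 + z ^ 2)" and M: "M \<ge> 0"
    and \<epsilon>: "\<epsilon> > 0"
  obtains D where "D \<ge> 0"
    and "\<And>x t. x \<in> {0..A} \<Longrightarrow> t \<ge> 0 \<Longrightarrow> \<bar>\<Phi> t - \<Phi> x\<bar> \<le> \<epsilon> + D * (t - x) ^ 2"
proof -
  have "uniformly_continuous_on {0..A+1} \<Phi>"
    by (rule compact_uniformly_continuous) (use cont in \<open>auto intro: continuous_on_subset\<close>)
  then obtain \<delta> where \<delta>: "\<delta> > 0"
    and close: "\<And>t y. t \<in> {0..A+1} \<Longrightarrow> y \<in> {0..A+1} \<Longrightarrow> dist t y < \<delta> \<Longrightarrow> dist (\<Phi> t) (\<Phi> y) < \<epsilon>"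
    unfolding uniformly_continuous_on_def using \<epsilon> by blast
  define d where "d = min \<delta> 1"
  have d: "d > 0" "d \<le> 1" "d \<le> \<delta>" using \<delta> by (auto simp: d_def)
  define D where "D = 3 * M * (1 + A^2) / d^2 + 2 * M"
  have D: "D \<ge> 0" using M d by (simp add: D_def)
  have "\<bar>\<Phi> t - \<Phi> x\<bar> \<le> \<epsilon> + D * (t - x) ^ 2" if x: "x \<in> {0..A}" and t: "t \<ge> 0" for x t
  proof (cases "\<bar>t - x\<bar> < d")
    case True
    then have "\<bar>\<Phi> t - \<Phi> x\<bar> < \<epsilon>" using close[of t x] x t d by (auto simp: dist_real_def)
    moreover have "D * (t - x) ^ 2 \<ge> 0" using D by simp
    ultimately show ?thesis by simp
  next
    case False
    then have "d ^ 2 \<le> \<bar>t - x\<bar> ^ 2" using d by (intro power_mono) auto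
    then have far: "1 \<le> (t - x) ^ 2 / d ^ 2" using d by simp
    have "\<bar>\<Phi> t - \<Phi> x\<bar> \<le> 3 * M * (1 + x^2) + 2 * M * (t - x) ^ 2"
      using x t by (intro growth_quadratic_modulus[OF growth M]) auto
    also have "3 * M * (1 + x^2) \<le> 3 * M * (1 + A^2)"
      using M x by (intro mult_left_mono) (auto intro: power_mono)
    also have "\<dots> \<le> 3 * M * (1 + A^2) / d^2 * (t - x) ^ 2"
      using M mult_left_mono[OF far, of "3 * M * (1 + A^2)"] by simp
    finally have "\<bar>\<Phi> t - \<Phi> x\<bar> \<le> D * (t - x) ^ 2" by (simp add: D_def algebra_simps)
    then show ?thesis using \<epsilon> by simp
  qed
  with D that show ?thesis by blast
qed

lemma R_op_error_bound_ge_one: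
  fixes \<Phi> :: "real \<Rightarrow> real"
  assumes \<alpha>: "\<alpha> > -1" and \<beta>: "\<beta> > 0" and \<eta>: "\<eta> \<ge> 1" and x: "x \<ge> 0"
    and cont: "continuous_on {0..} \<Phi>"
    and growth: "\<And>z. z \<ge> 0 \<Longrightarrow> \<bar>\<Phi> z\<bar> \<le> M * (1 + z ^ 2)"
    and D: "D \<ge> 0" and modulus: "\<And>t. t \<ge> 0 \<Longrightarrow> \<bar>\<Phi> t - \<Phi> x\<bar> \<le> E + D * (t - x) ^ 2"
  shows "\<bar>R_op \<alpha> \<beta> \<eta> \<Phi> x - \<Phi> x\<bar>
           \<le> E + D * (((\<alpha> + 1)^2 + 2 * (\<alpha> + 1) + (\<alpha> + 1) / \<beta>) + (3 + 1 / \<beta>) * x) / \<eta>"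
proof -
  define C0 where "C0 = (\<alpha> + 1)^2 + 2 * (\<alpha> + 1) + (\<alpha> + 1) / \<beta>"
  have "C0 \<ge> 0" using \<alpha> \<beta> by (simp add: C0_def)
  then have "C0 / \<eta>^2 \<le> C0 / \<eta>" using \<eta> by (simp add: frac_le power2_eq_square)
  then have "D * (C0 / \<eta>^2 + (3 + 1 / \<beta>) * x / \<eta>) \<le> D * ((C0 + (3 + 1 / \<beta>) * x) / \<eta>)"
    using D by (intro mult_left_mono) (simp_all add: add_divide_distrib)
  moreover have "\<eta> > 0" using \<eta> by simp
  note R_op_error_bound[OF \<alpha> \<beta> this x cont growth modulus]
  ultimately show ?thesis by (simp add: C0_def)
qed

lemma R_op_error_le_zeta:
  fixes \<Phi> :: "real \<Rightarrow> real"
  assumes \<alpha>: "\<alpha> > -1" and \<beta>: "\<beta> > 0" and cont: "continuous_on {0..} \<Phi>"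
    and growth: "\<And>z. z \<ge> 0 \<Longrightarrow> \<bar>\<Phi> z\<bar> \<le> M * (1 + z ^ 2)" and M: "M \<ge> 0"
  obtains K where "\<And>\<eta> x. \<eta> \<ge> 1 \<Longrightarrow> x \<ge> 0 \<Longrightarrow> \<bar>R_op \<alpha> \<beta> \<eta> \<Phi> x - \<Phi> x\<bar> \<le> K * zeta x"
proof
  define C0 where "C0 = (\<alpha> + 1)^2 + 2 * (\<alpha> + 1) + (\<alpha> + 1) / \<beta>"
  fix \<eta> x :: real assume \<eta>: "\<eta> \<ge> 1" and x: "x \<ge> 0"
  define X where "X = C0 + (3 + 1 / \<beta>) * x"
  have C0: "C0 \<ge> 0" using \<alpha> \<beta> by (simp add: C0_def)
  then have "X \<ge> 0" using x \<beta> by (simp add: X_def)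
  then have "X / \<eta> \<le> X" using frac_le[of X X 1 \<eta>] \<eta> by simp
  also have "X \<le> (C0 + (3 + 1 / \<beta>)) * zeta x"
    using mult_left_mono[OF one_le_zeta[of x] C0] mult_left_mono[OF le_zeta, of "3 + 1 / \<beta>" x] \<beta>
    by (simp add: X_def distrib_right)
  finally have "2 * M * (X / \<eta>) \<le> 2 * M * ((C0 + (3 + 1 / \<beta>)) * zeta x)"
    using M by (intro mult_left_mono) auto
  moreover have "\<bar>R_op \<alpha> \<beta> \<eta> \<Phi> x - \<Phi> x\<bar> \<le> 3 * M * zeta x + 2 * M * (X / \<eta>)"
    using R_op_error_bound_ge_one[OF \<alpha> \<beta> \<eta> x cont growth _ growth_quadratic_modulus[OF growth M x]] M
    by (simp add: X_def C0_def zeta_def)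
  ultimately show "\<bar>R_op \<alpha> \<beta> \<eta> \<Phi> x - \<Phi> x\<bar> \<le> (3 * M + 2 * M * (C0 + (3 + 1 / \<beta>))) * zeta x"
    by (simp add: algebra_simps)
qed

lemma R_op_converges_uniformly_on_bounded:
  fixes \<Phi> :: "real \<Rightarrow> real"
  assumes \<alpha>: "\<alpha> > -1" and \<beta>: "\<beta> > 0" and cont: "continuous_on {0..} \<Phi>"
    and growth: "\<And>z. z \<ge> 0 \<Longrightarrow> \<bar>\<Phi> z\<bar> \<le> M * (1 + z ^ 2)" and M: "M \<ge> 0"
    and \<epsilon>: "\<epsilon> > 0"
  shows "eventually (\<lambda>\<eta>. \<forall>x\<in>{0..A}. \<bar>R_op \<alpha> \<beta> \<eta> \<Phi> x - \<Phi> x\<bar> \<le> \<epsilon>) at_top"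
proof -
  obtain D where D: "D \<ge> 0"
    and modulus: "\<And>x t. x \<in> {0..A} \<Longrightarrow> t \<ge> 0 \<Longrightarrow> \<bar>\<Phi> t - \<Phi> x\<bar> \<le> \<epsilon> / 2 + D * (t - x) ^ 2"
    using continuous_quadratic_modulus[OF cont growth M, of "\<epsilon> / 2" A] \<epsilon> by auto
  define C where "C = (\<alpha> + 1)^2 + 2 * (\<alpha> + 1) + (\<alpha> + 1) / \<beta> + (3 + 1 / \<beta>) * A"
  have "((\<lambda>\<eta>. D * C / \<eta>) \<longlongrightarrow> 0) at_top"
    by (intro tendsto_divide_0[OF tendsto_const] filterlim_at_top_imp_at_infinity filterlim_ident)
  then have "eventually (\<lambda>\<eta>. D * C / \<eta> < \<epsilon> / 2) at_top"
    using \<epsilon> by (intro order_tendstoD) auto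
  then show ?thesis using eventually_ge_at_top[of 1]
  proof eventually_elim
    case (elim \<eta>)
    show ?case
    proof
      fix x assume x: "x \<in> {0..A}"
      have "\<bar>R_op \<alpha> \<beta> \<eta> \<Phi> x - \<Phi> x\<bar>
          \<le> \<epsilon> / 2 + D * (((\<alpha> + 1)^2 + 2 * (\<alpha> + 1) + (\<alpha> + 1) / \<beta>) + (3 + 1 / \<beta>) * x) / \<eta>"
        using x elim(2) by (intro R_op_error_bound_ge_one[OF \<alpha> \<beta> _ _ cont growth D] modulus) auto
      also have "\<dots> \<le> \<epsilon> / 2 + D * C / \<eta>"
        using x elim(2) \<beta> D mult_left_mono[of x A "3 + 1 / \<beta>"]
        by (intro add_left_mono divide_right_mono mult_left_mono) (auto simp: C_def)
      finally show "\<bar>R_op \<alpha> \<beta> \<eta> \<Phi> x - \<Phi> x\<bar> \<le> \<epsilon>" using elim(1) by linarith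
    qed
  qed
qed

text \<open>Where \<open>zeta x \<ge> Y\<close> the quotient is at most \<open>K * zeta x powr (1 - l)\<close>, which is small;
  the remaining \<open>x\<close> lie in the bounded set \<open>{0..Y}\<close>.\<close>

lemma weighted_error_eventually_small:
  fixes err :: "real \<Rightarrow> real \<Rightarrow> real"
  assumes l: "l > 1"
    and global: "\<And>\<eta> x. \<eta> \<ge> 1 \<Longrightarrow> x \<ge> 0 \<Longrightarrow> \<bar>err \<eta> x\<bar> \<le> K * zeta x"
    and local: "\<And>A \<epsilon>. \<epsilon> > 0 \<Longrightarrow> eventually (\<lambda>\<eta>. \<forall>x\<in>{0..A}. \<bar>err \<eta> x\<bar> \<le> \<epsilon>) at_top"
    and \<epsilon>: "\<epsilon> > 0"
  shows "eventually (\<lambda>\<eta>. \<forall>x\<in>{0..}. \<bar>err \<eta> x\<bar> / zeta x powr l \<le> \<epsilon>) at_top"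
proof -
  have "((\<lambda>y. K * y powr (1 - l)) \<longlongrightarrow> K * 0) at_top"
    using l by (intro tendsto_mult tendsto_const tendsto_neg_powr filterlim_ident) auto
  then have "eventually (\<lambda>y. K * y powr (1 - l) < \<epsilon>) at_top"
    using \<epsilon> by (intro order_tendstoD) auto
  then obtain Y where Y: "\<And>y. y \<ge> Y \<Longrightarrow> K * y powr (1 - l) < \<epsilon>"
    by (auto simp: eventually_at_top_linorder)
  have large: "\<bar>err \<eta> x\<bar> / zeta x powr l \<le> \<epsilon>" if "\<eta> \<ge> 1" "x \<ge> 0" "zeta x \<ge> Y" for \<eta> x
  proof -
    have "\<bar>err \<eta> x\<bar> / zeta x powr l \<le> K * zeta x / zeta x powr l"
      using global[OF that(1,2)] one_le_zeta[of x] by (intro divide_right_mono) auto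
    also have "\<dots> = K * zeta x powr (1 - l)"
      using one_le_zeta[of x] by (simp add: powr_diff)
    finally show ?thesis using Y[OF that(3)] by simp
  qed
  from local[OF \<epsilon>, of Y] show ?thesis using eventually_ge_at_top[of 1]
  proof eventually_elim
    case (elim \<eta>)
    show ?case
    proof
      fix x :: real assume x: "x \<in> {0..}"
      show "\<bar>err \<eta> x\<bar> / zeta x powr l \<le> \<epsilon>"
      proof (cases "zeta x \<ge> Y")
        case False
        then have "\<bar>err \<eta> x\<bar> \<le> \<epsilon>" using elim(1) le_zeta[of x] x by auto
        moreover have "1 \<le> zeta x powr l" using one_le_zeta[of x] l by (simp add: ge_one_powr_ge_zero)
        ultimately show ?thesis
          using frac_le[of "\<bar>err \<eta> x\<bar>" "\<bar>err \<eta> x\<bar>" 1 "zeta x powr l"] by simp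
      qed (use large elim(2) x in auto)
    qed
  qed
qed

lemma tendsto_SUP_ereal_zeroI:
  fixes f :: "'a \<Rightarrow> 'b \<Rightarrow> real"
  assumes "S \<noteq> {}" and nonneg: "\<And>y x. x \<in> S \<Longrightarrow> 0 \<le> f y x"
    and small: "\<And>\<epsilon>. \<epsilon> > 0 \<Longrightarrow> eventually (\<lambda>y. \<forall>x\<in>S. f y x \<le> \<epsilon>) F"
  shows "((\<lambda>y. SUP x\<in>S. ereal (f y x)) \<longlongrightarrow> 0) F"
proof (rule order_tendstoI)
  fix a :: ereal assume "a < 0"
  obtain x where "x \<in> S" using assms(1) by blast
  then have "0 \<le> (SUP x\<in>S. ereal (f y x))" for y
    using nonneg by (intro SUP_upper2) auto
  with \<open>a < 0\<close> show "eventually (\<lambda>y. a < (SUP x\<in>S. ereal (f y x))) F"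
    by (intro always_eventually allI) (meson less_le_trans)
next
  fix a :: ereal assume "0 < a"
  then obtain \<epsilon> where \<epsilon>: "0 < ereal \<epsilon>" "ereal \<epsilon> < a" using ereal_dense2 by blast
  have "eventually (\<lambda>y. \<forall>x\<in>S. f y x \<le> \<epsilon>) F" using \<epsilon>(1) by (intro small) simp
  then show "eventually (\<lambda>y. (SUP x\<in>S. ereal (f y x)) < a) F"
  proof (rule eventually_mono)
    fix y assume "\<forall>x\<in>S. f y x \<le> \<epsilon>"
    then have "(SUP x\<in>S. ereal (f y x)) \<le> ereal \<epsilon>" by (intro SUP_least) auto
    then show "(SUP x\<in>S. ereal (f y x)) < a" using \<epsilon>(2) by (rule le_less_trans)
  qed
qed

theorem mainTheorem10:
  fixes \<alpha> \<beta> l :: real and \<Phi> :: "real \<Rightarrow> real"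
  assumes "\<alpha> > -1" and "\<beta> > 0" and "\<Phi> \<in> C_zeta" and "l > 1"
  shows "((\<lambda>\<eta>. SUP x\<in>{0::real..}. ereal (\<bar>R_op \<alpha> \<beta> \<eta> \<Phi> x - \<Phi> x\<bar> / (zeta x) powr l))
           \<longlongrightarrow> 0) at_top"
proof -
  from assms(3) obtain M where M: "\<And>x. x \<ge> 0 \<Longrightarrow> \<bar>\<Phi> x\<bar> \<le> M * zeta x"
    and cont: "continuous_on {0..} \<Phi>"
    unfolding C_zeta_def B_zeta_def by auto
  have M_nonneg: "M \<ge> 0" using M[of 0] by (simp add: zeta_def)
  have growth: "\<And>z. z \<ge> 0 \<Longrightarrow> \<bar>\<Phi> z\<bar> \<le> M * (1 + z ^ 2)" using M by (simp add: zeta_def)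
  obtain K where K: "\<And>\<eta> x. \<eta> \<ge> 1 \<Longrightarrow> x \<ge> 0 \<Longrightarrow> \<bar>R_op \<alpha> \<beta> \<eta> \<Phi> x - \<Phi> x\<bar> \<le> K * zeta x"
    using R_op_error_le_zeta[OF assms(1,2) cont growth M_nonneg] by blast
  show ?thesis
  proof (rule tendsto_SUP_ereal_zeroI)
    fix \<epsilon> :: real assume "\<epsilon> > 0"
    with weighted_error_eventually_small[OF assms(4), of "\<lambda>\<eta> x. R_op \<alpha> \<beta> \<eta> \<Phi> x - \<Phi> x", OF K
        R_op_converges_uniformly_on_bounded[OF assms(1,2) cont growth M_nonneg]]
    show "eventually (\<lambda>\<eta>. \<forall>x\<in>{0..}. \<bar>R_op \<alpha> \<beta> \<eta> \<Phi> x - \<Phi> x\<bar> / zeta x powr l \<le> \<epsilon>) at_top"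
      by blast
  qed auto
qed

end
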